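(* If $\mathcal A\subseteq\binom{[n]}{k}$ is $t$-intersecting, then for every $1\le i<j\le n$, ${\rm co}_2(\Delta_{ij}(\mathcal A))\ge{\rm co}_2(\mathcal A)$. In particular, there exists a left-compressed $t$-intersecting family $\mathcal B\subseteq\binom{[n]}{k}$ such that ${\rm co}_2(\mathcal B)\ge{\rm co}_2(\mathcal A)$.
   Context: A family is $t$-intersecting if any two members share at least $t$ elements. $d(E)=|\{F\in\mathcal F:E\subseteq F\}|$, ${\rm co}_2(\mathcal F)=\sum_{E\in\binom{[n]}{k-1}}d(E)^2$. Shift: for $A\in\mathcal A$, $\delta_{ij}(A)=(A\setminus\{j\})\cup\{i\}$ if $j\in A$, $i\notin A$ and $(A\setminus\{j\})\cup\{i\}\notin\mathcal A$; otherwise $\delta_{ij}(A)=A$; $\Delta_{ij}(\mathcal A)=\{\delta_{ij}(A):A\in\mathcal A\}$. A family $\mathcal B$ is left-compressed if $\Delta_{ij}(\mathcal B)=\mathcal B$ for all $1\le i<j\le n$. *)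

theory Defs
  imports Main
begin

definition ksets :: "nat \<Rightarrow> nat \<Rightarrow> nat set set" where
  "ksets n k = {K. K \<subseteq> {1..n} \<and> card K = k}"

definition t_intersecting :: "nat \<Rightarrow> nat set set \<Rightarrow> bool" where
  "t_intersecting t F \<longleftrightarrow> (\<forall>A\<in>F. \<forall>B\<in>F. card (A \<inter> B) \<ge> t)"

definition deg :: "nat set set \<Rightarrow> nat set \<Rightarrow> nat" where
  "deg F E = card {A\<in>F. E \<subseteq> A}"

definition co2 :: "nat \<Rightarrow> nat \<Rightarrow> nat set set \<Rightarrow> nat" where
  "co2 n k F = (\<Sum>E\<in>ksets n (k - 1). (deg F E)^2)"

definition delta :: "nat \<Rightarrow> nat \<Rightarrow> nat set set \<Rightarrow> nat set \<Rightarrow> nat set" where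
  "delta i j F A = (if j \<in> A \<and> i \<notin> A \<and> insert i (A - {j}) \<notin> F
                    then insert i (A - {j}) else A)"

definition shift :: "nat \<Rightarrow> nat \<Rightarrow> nat set set \<Rightarrow> nat set set" where
  "shift i j F = delta i j F ` F"

definition left_compressed :: "nat \<Rightarrow> nat set set \<Rightarrow> bool" where
  "left_compressed n F \<longleftrightarrow> (\<forall>i j. 1 \<le> i \<and> i < j \<and> j \<le> n \<longrightarrow> shift i j F = F)"

end

theory Submission imports Defs begin

text \<open>Pair each \<open>(k-1)\<close>-set \<open>E\<close> with \<open>j \<in> E\<close>, \<open>i \<notin> E\<close> with \<open>E' = E - {j} \<union> {i}\<close>.
  Shifting does not lower the degree of an unpaired set, and on a pair it preserves
  \<open>d(E) + d(E')\<close> while the new \<open>d(E)\<close> is at most both old degrees; by convexity of \<open>x\<^sup>2\<close>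
  the sum of squares cannot drop. Shifting also preserves \<open>t\<close>-intersection and strictly
  decreases the total element sum of a family it changes, so repeated shifting ends in a
  left-compressed family.\<close>

abbreviation swap :: "'a \<Rightarrow> 'a \<Rightarrow> 'a set \<Rightarrow> 'a set" where
  "swap i j E \<equiv> insert i (E - {j})"

lemma finite_ksets: "finite (ksets n k)"
  unfolding ksets_def by (rule finite_subset[of _ "Pow {1..n}"]) auto

lemma finite_of_mem_ksets: "E \<in> ksets n k \<Longrightarrow> finite E"
  unfolding ksets_def by (auto intro: finite_subset)

lemma card_swap:
  assumes "finite E" "j \<in> E" "i \<notin> E"
  shows "card (swap i j E) = card E"
  using assms by (metis DiffE card_Suc_Diff1 card_insert_disjoint finite_Diff)

lemma swap_in_ksets:
  assumes "E \<in> ksets n m" "j \<in> E" "i \<notin> E" "1 \<le> i" "i \<le> n"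
  shows "swap i j E \<in> ksets n m"
proof -
  have "card (swap i j E) = m"
    using assms card_swap[OF finite_of_mem_ksets] unfolding ksets_def by blast
  then show ?thesis using assms unfolding ksets_def by auto
qed

lemma swap_swap:
  assumes "j \<in> E" "i \<notin> E" "i \<noteq> j"
  shows "swap j i (swap i j E) = E"
  using assms by auto

lemma inj_on_swap:
  assumes "i \<noteq> j"
  shows "inj_on (swap i j) {E. j \<in> E \<and> i \<notin> E}"
  by (rule inj_on_inverseI[where g = "swap j i"]) (use assms swap_swap in blast)

lemma shift_subset_ksets:
  assumes "\<A> \<subseteq> ksets n k" "1 \<le> i" "i \<le> n"
  shows "shift i j \<A> \<subseteq> ksets n k"
  using assms swap_in_ksets unfolding shift_def delta_def by auto

lemma delta_moved: "j \<in> A \<Longrightarrow> i \<notin> A \<Longrightarrow> swap i j A \<notin> \<A> \<Longrightarrow> delta i j \<A> A = swap i j A"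
  unfolding delta_def by simp

lemma delta_unmoved: "\<not> (j \<in> A \<and> i \<notin> A \<and> swap i j A \<notin> \<A>) \<Longrightarrow> delta i j \<A> A = A"
  unfolding delta_def by (rule if_not_P)

lemma inj_on_delta:
  assumes "i \<noteq> j"
  shows "inj_on (delta i j \<A>) \<A>"
proof (rule inj_onI)
  fix A B assume "A \<in> \<A>" "B \<in> \<A>" and eq: "delta i j \<A> A = delta i j \<A> B"
  let ?moved = "\<lambda>A. j \<in> A \<and> i \<notin> A \<and> swap i j A \<notin> \<A>"
  \<comment> \<open>a moved set lands outside \<open>\<A>\<close>, an unmoved one stays in \<open>\<A>\<close>\<close>
  consider "?moved A" "?moved B" | "\<not> ?moved A" "\<not> ?moved B"
    using eq \<open>A \<in> \<A>\<close> \<open>B \<in> \<A>\<close> unfolding delta_def by (auto split: if_splits)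
  then show "A = B"
  proof cases
    case 1
    with eq have "swap i j A = swap i j B" by (simp add: delta_def)
    with 1 inj_on_swap[OF assms] show ?thesis by (auto dest: inj_onD)
  next
    case 2
    with eq show ?thesis by (simp add: delta_def)
  qed
qed

lemma deg_shift:
  assumes "i \<noteq> j"
  shows "deg (shift i j \<A>) E = card {A\<in>\<A>. E \<subseteq> delta i j \<A> A}"
proof -
  have "{B\<in>shift i j \<A>. E \<subseteq> B} = delta i j \<A> ` {A\<in>\<A>. E \<subseteq> delta i j \<A> A}"
    unfolding shift_def by auto
  moreover have "inj_on (delta i j \<A>) {A\<in>\<A>. E \<subseteq> delta i j \<A> A}"
    using inj_on_delta[OF assms] by (rule inj_on_subset) auto
  ultimately show ?thesis unfolding deg_def by (simp add: card_image)
qed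

lemma deg_le_deg_shift:
  assumes "i \<noteq> j" "finite \<A>" "\<not> (j \<in> E \<and> i \<notin> E)"
  shows "deg \<A> E \<le> deg (shift i j \<A>) E"
  unfolding deg_shift[OF assms(1)] unfolding deg_def
  by (rule card_mono) (use assms in \<open>auto simp: delta_def\<close>)

lemma deg_shift_le_deg:
  assumes "i \<noteq> j" "finite \<A>" "j \<in> E" "i \<notin> E"
  shows "deg (shift i j \<A>) E \<le> deg \<A> E"
  unfolding deg_shift[OF assms(1)] unfolding deg_def
  by (rule card_mono) (use assms in \<open>auto simp: delta_def split: if_splits\<close>)

lemma deg_shift_le_deg_swap:
  assumes "i \<noteq> j" "finite \<A>" "j \<in> E" "i \<notin> E"
  shows "deg (shift i j \<A>) E \<le> deg \<A> (swap i j E)"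
  unfolding deg_shift[OF assms(1)] unfolding deg_def
proof (rule card_inj_on_le)
  let ?S = "{A\<in>\<A>. E \<subseteq> delta i j \<A> A}"
  \<comment> \<open>a set still containing \<open>E\<close> after shifting was not moved, so its swap lies in \<open>\<A>\<close>\<close>
  let ?h = "\<lambda>A. if i \<in> A then A else swap i j A"
  have S: "delta i j \<A> A = A \<and> j \<in> A \<and> E \<subseteq> A \<and> (i \<notin> A \<longrightarrow> swap i j A \<in> \<A>)"
    if "A \<in> ?S" for A
    using that assms by (auto simp: delta_def split: if_splits)
  show "inj_on ?h ?S"
  proof (rule inj_onI)
    fix A B assume "A \<in> ?S" "B \<in> ?S" "?h A = ?h B"
    with S[OF this(1)] S[OF this(2)] assms(1) show "A = B"
      by (auto split: if_splits)
  qed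
  show "?h ` ?S \<subseteq> {A\<in>\<A>. swap i j E \<subseteq> A}"
    using S assms by auto
  show "finite {A\<in>\<A>. swap i j E \<subseteq> A}"
    using assms by auto
qed

lemma deg_shift_add_deg_shift_swap:
  assumes "i \<noteq> j" "finite \<A>" "j \<in> E" "i \<notin> E"
  shows "deg (shift i j \<A>) E + deg (shift i j \<A>) (swap i j E) = deg \<A> E + deg \<A> (swap i j E)"
proof -
  have card_eq_sum: "card {A\<in>\<A>. P A} = (\<Sum>A\<in>\<A>. of_bool (P A))" for P
    using assms(2) by (simp add: Int_def conj_commute)
  \<comment> \<open>a moved set trades containing \<open>E\<close> for containing \<open>swap i j E\<close>\<close>
  have "(\<Sum>A\<in>\<A>. of_bool (E \<subseteq> delta i j \<A> A) + of_bool (swap i j E \<subseteq> delta i j \<A> A))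
      = (\<Sum>A\<in>\<A>. of_bool (E \<subseteq> A) + (of_bool (swap i j E \<subseteq> A) :: nat))"
    by (rule sum.cong) (use assms in \<open>auto simp: delta_def\<close>)
  then show ?thesis
    unfolding deg_shift[OF assms(1)] unfolding deg_def card_eq_sum sum.distrib by simp
qed

lemma sum_squares_le_if_spread:
  fixes x y x' y' :: nat
  assumes "x' \<le> x" "x' \<le> y" "x' + y' = x + y"
  shows "x\<^sup>2 + y\<^sup>2 \<le> x'\<^sup>2 + y'\<^sup>2"
proof -
  obtain a b where "x = x' + a" "y = x' + b"
    using assms(1,2) le_Suc_ex by metis
  moreover from this assms(3) have "y' = x' + a + b" by simp
  ultimately show ?thesis by (simp add: power2_eq_square algebra_simps)
qed

lemma sum_mono_paired:
  fixes f g :: "'a \<Rightarrow> 'b::ordered_comm_monoid_add"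
  assumes "finite K" "X \<subseteq> K" "inj_on s X" "s ` X \<subseteq> K" "s ` X \<inter> X = {}"
    and "\<And>E. E \<in> K \<Longrightarrow> E \<notin> X \<Longrightarrow> E \<notin> s ` X \<Longrightarrow> f E \<le> g E"
    and "\<And>E. E \<in> X \<Longrightarrow> f E + f (s E) \<le> g E + g (s E)"
  shows "sum f K \<le> sum g K"
proof -
  let ?R = "K - X - s ` X"
  have fin: "finite X" "finite (s ` X)" "finite ?R"
    using assms(1,2,4) finite_subset by auto
  have split: "sum h K = (\<Sum>E\<in>X. h E + h (s E)) + sum h ?R" for h :: "'a \<Rightarrow> 'b"
  proof -
    have K: "K = (X \<union> s ` X) \<union> ?R" using assms(2,4) by blast
    have "sum h K = sum h (X \<union> s ` X) + sum h ?R"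
      by (subst K, rule sum.union_disjoint) (use fin in auto)
    also have "sum h (X \<union> s ` X) = sum h X + sum (h \<circ> s) X"
      using fin assms(3,5) by (simp add: sum.union_disjoint sum.reindex Int_commute)
    finally show ?thesis by (simp add: sum.distrib)
  qed
  have "(\<Sum>E\<in>X. f E + f (s E)) \<le> (\<Sum>E\<in>X. g E + g (s E))"
    by (rule sum_mono) (rule assms(7))
  moreover have "sum f ?R \<le> sum g ?R"
    by (rule sum_mono) (use assms(6) in auto)
  ultimately show ?thesis
    unfolding split[of f] split[of g] by (rule add_mono)
qed

lemma co2_le_co2_shift:
  assumes "\<A> \<subseteq> ksets n k" "1 \<le> i" "i < j" "j \<le> n"
  shows "co2 n k \<A> \<le> co2 n k (shift i j \<A>)"
  unfolding co2_def
proof (rule sum_mono_paired)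
  let ?X = "{E \<in> ksets n (k - 1). j \<in> E \<and> i \<notin> E}"
  have ij: "i \<noteq> j" using assms by simp
  have fin: "finite \<A>" using assms(1) finite_ksets finite_subset by blast
  show "finite (ksets n (k - 1))" by (rule finite_ksets)
  show "?X \<subseteq> ksets n (k - 1)" by blast
  show "inj_on (swap i j) ?X" using inj_on_swap[OF ij] by (rule inj_on_subset) blast
  show "swap i j ` ?X \<subseteq> ksets n (k - 1)" using swap_in_ksets assms by auto
  show "swap i j ` ?X \<inter> ?X = {}" by auto
  show "(deg \<A> E)\<^sup>2 \<le> (deg (shift i j \<A>) E)\<^sup>2" if "E \<in> ksets n (k - 1)" "E \<notin> ?X" for E
    using deg_le_deg_shift[OF ij fin, of E] that by (simp add: power_mono)
  show "(deg \<A> E)\<^sup>2 + (deg \<A> (swap i j E))\<^sup>2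
      \<le> (deg (shift i j \<A>) E)\<^sup>2 + (deg (shift i j \<A>) (swap i j E))\<^sup>2" if "E \<in> ?X" for E
    using that deg_shift_le_deg[OF ij fin] deg_shift_le_deg_swap[OF ij fin]
      deg_shift_add_deg_shift_swap[OF ij fin]
    by (intro sum_squares_le_if_spread) auto
qed

lemma le_card_swap_inter:
  assumes "t_intersecting t \<A>" "\<And>A. A \<in> \<A> \<Longrightarrow> finite A"
    and A: "A \<in> \<A>" "j \<in> A" "i \<notin> A"
    and B: "B \<in> \<A>" "j \<in> B \<and> i \<notin> B \<longrightarrow> swap i j B \<in> \<A>"
  shows "t \<le> card (swap i j A \<inter> B)"
proof -
  have AB: "t \<le> card (A \<inter> B)" using assms(1) A B unfolding t_intersecting_def by blast
  consider "i \<in> B" "j \<in> B" | "i \<in> B" "j \<notin> B" | "i \<notin> B" "j \<in> B" | "i \<notin> B" "j \<notin> B"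
    by blast
  then show ?thesis
  proof cases
    case 1
    then have "swap i j A \<inter> B = swap i j (A \<inter> B)" by auto
    moreover have "card (swap i j (A \<inter> B)) = card (A \<inter> B)"
      using 1 A assms(2) by (intro card_swap) auto
    ultimately show ?thesis using AB by simp
  next
    case 2
    then have "A \<inter> B \<subseteq> swap i j A \<inter> B" by auto
    then show ?thesis using AB assms(2) B le_trans card_mono by (metis finite_Int)
  next
    case 3
    then have "t \<le> card (A \<inter> swap i j B)"
      using assms(1) A B unfolding t_intersecting_def by blast
    moreover have "A \<inter> swap i j B = swap i j A \<inter> B" using 3 A by auto
    ultimately show ?thesis by simp
  next
    case 4
    then have "swap i j A \<inter> B = A \<inter> B" by auto
    then show ?thesis using AB by simp
  qed
qed

lemma t_intersecting_shift:
  assumes T: "t_intersecting t \<A>" and fin: "\<And>A. A \<in> \<A> \<Longrightarrow> finite A" and ij: "i \<noteq> j"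
  shows "t_intersecting t (shift i j \<A>)"
  unfolding t_intersecting_def
proof (intro ballI)
  let ?moved = "\<lambda>A. j \<in> A \<and> i \<notin> A \<and> swap i j A \<notin> \<A>"
  fix C D assume "C \<in> shift i j \<A>" "D \<in> shift i j \<A>"
  then obtain A B where AB: "A \<in> \<A>" "B \<in> \<A>" "C = delta i j \<A> A" "D = delta i j \<A> B"
    unfolding shift_def by blast
  have AB_inter: "t \<le> card (A \<inter> B)" using T AB unfolding t_intersecting_def by blast
  consider "?moved A" "?moved B" | "?moved A" "\<not> ?moved B" | "\<not> ?moved A" "?moved B"
    | "\<not> ?moved A" "\<not> ?moved B"
    by blast
  then show "t \<le> card (C \<inter> D)"
  proof cases
    case 1
    then have "C \<inter> D = swap i j (A \<inter> B)" using AB by (auto simp: delta_moved)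
    with 1 AB AB_inter fin show ?thesis by (simp add: card_swap)
  next
    case 2
    then have "C \<inter> D = swap i j A \<inter> B" using AB by (simp add: delta_moved delta_unmoved)
    moreover have "t \<le> card (swap i j A \<inter> B)"
      using 2 AB by (intro le_card_swap_inter[OF T fin]) auto
    ultimately show ?thesis by simp
  next
    case 3
    then have "C \<inter> D = swap i j B \<inter> A" using AB by (auto simp: delta_moved delta_unmoved)
    moreover have "t \<le> card (swap i j B \<inter> A)"
      using 3 AB by (intro le_card_swap_inter[OF T fin]) auto
    ultimately show ?thesis by simp
  next
    case 4
    then show ?thesis using AB AB_inter by (simp add: delta_unmoved)
  qed
qed

definition weight :: "nat set set \<Rightarrow> nat" where
  "weight \<A> = (\<Sum>A\<in>\<A>. \<Sum>A)"

lemma weight_shift_less: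
  assumes "\<A> \<subseteq> ksets n k" "i < j" "shift i j \<A> \<noteq> \<A>"
  shows "weight (shift i j \<A>) < weight \<A>"
proof -
  let ?moved = "\<lambda>A. j \<in> A \<and> i \<notin> A \<and> swap i j A \<notin> \<A>"
  have fin\<A>: "finite \<A>" using assms(1) finite_ksets finite_subset by blast
  have fin: "finite A" if "A \<in> \<A>" for A using that assms(1) finite_of_mem_ksets by blast
  have less: "\<Sum>(delta i j \<A> A) < \<Sum>A" if "A \<in> \<A>" "?moved A" for A
  proof -
    have "\<Sum>(delta i j \<A> A) = i + \<Sum>(A - {j})" using that fin by (simp add: delta_moved)
    moreover have "\<Sum>A = j + \<Sum>(A - {j})" using that fin sum.remove by metis
    ultimately show ?thesis using assms(2) by simp
  qed
  have le: "\<Sum>(delta i j \<A> A) \<le> \<Sum>A" if "A \<in> \<A>" for A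
    using less[OF that] delta_unmoved[of j A i] by (cases "?moved A") auto
  have "\<exists>A\<in>\<A>. ?moved A"
  proof (rule ccontr)
    assume "\<not> (\<exists>A\<in>\<A>. ?moved A)"
    then have "\<forall>A\<in>\<A>. delta i j \<A> A = A" by (simp add: delta_unmoved)
    then have "shift i j \<A> = \<A>" unfolding shift_def by simp
    with assms(3) show False ..
  qed
  then have "(\<Sum>A\<in>\<A>. \<Sum>(delta i j \<A> A)) < (\<Sum>A\<in>\<A>. \<Sum>A)"
    using less le fin\<A> by (intro sum_strict_mono_ex1) auto
  moreover have "weight (shift i j \<A>) = (\<Sum>A\<in>\<A>. \<Sum>(delta i j \<A> A))"
    using assms(2) unfolding weight_def shift_def by (simp add: sum.reindex inj_on_delta)
  ultimately show ?thesis unfolding weight_def by simp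
qed

lemma exists_left_compressed:
  assumes "\<A> \<subseteq> ksets n k" "t_intersecting t \<A>"
  shows "\<exists>\<B>. \<B> \<subseteq> ksets n k \<and> left_compressed n \<B> \<and> t_intersecting t \<B>
              \<and> co2 n k \<B> \<ge> co2 n k \<A>"
  using assms
proof (induction "weight \<A>" arbitrary: \<A> rule: less_induct)
  case less
  show ?case
  proof (cases "left_compressed n \<A>")
    case True
    with less.prems show ?thesis by blast
  next
    case False
    then obtain i j where ij: "1 \<le> i" "i < j" "j \<le> n" "shift i j \<A> \<noteq> \<A>"
      unfolding left_compressed_def by blast
    have "weight (shift i j \<A>) < weight \<A>"
      using weight_shift_less less.prems(1) ij by blast
    moreover have "shift i j \<A> \<subseteq> ksets n k"
      using shift_subset_ksets less.prems(1) ij by simp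
    moreover have "t_intersecting t (shift i j \<A>)"
      using less.prems ij by (intro t_intersecting_shift) (auto intro: finite_of_mem_ksets)
    ultimately obtain \<B> where "\<B> \<subseteq> ksets n k" "left_compressed n \<B>" "t_intersecting t \<B>"
        and "co2 n k (shift i j \<A>) \<le> co2 n k \<B>"
      using less.hyps by blast
    moreover have "co2 n k \<A> \<le> co2 n k (shift i j \<A>)"
      using co2_le_co2_shift less.prems(1) ij by blast
    ultimately show ?thesis by (meson le_trans)
  qed
qed

theorem corollary2p3:
  fixes n k t :: nat and \<A> :: "nat set set"
  assumes "\<A> \<subseteq> ksets n k"
    and "t_intersecting t \<A>"
  shows "(\<forall>i j. 1 \<le> i \<and> i < j \<and> j \<le> n \<longrightarrow> co2 n k (shift i j \<A>) \<ge> co2 n k \<A>)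
       \<and> (\<exists>\<B>. \<B> \<subseteq> ksets n k \<and> left_compressed n \<B> \<and> t_intersecting t \<B>
              \<and> co2 n k \<B> \<ge> co2 n k \<A>)"
  using co2_le_co2_shift[OF assms(1)] exists_left_compressed[OF assms] by blast

end
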